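(* Under the standing assumptions in the context, let $\mathcal U$ be a sufficiently small neighborhood of $(0,\bar X)$ and let $\omega\subset\mathcal U\cap\{t>0\}$. Let $\phi>0$ be a bounded function on $\omega$ and suppose there is $C>0$ with \[ \phi^2 a\le C\Delta,\qquad \phi\,|\partial_t\Delta|\le C\Delta,\qquad \phi\,|\partial_t a|\le C a\qquad\text{on }\omega . \] Then there is $C'>0$ such that on $\omega$ \[ \phi^2\le C'\lambda_1,\qquad \phi\,|\partial_t\lambda_1|\le C'\lambda_1,\qquad \phi\,|\partial_t\lambda_2|\le C'\lambda_2 . \]
   Context: Let $W\subset\mathbb R^l$ be open, $\bar X\in W$, $c,T>0$, and let $a(t,X),b(t,X)$ be real-valued $C^\infty$ functions on $(-c,T)\times W$ with bounded derivatives of all orders. Assume $\Delta(t,X):=4a(t,X)^3-27b(t,X)^2\ge 0$ on $[0,T)\times W$, $a(0,\bar X)=0$, and $a(t,X)>0$ on $(0,T)\times W$. Let $S(t,X)=\begin{bmatrix}3&0&-a\\0&2a&3b\\-a&3b&a^2\end{bmatrix}$ and let $0\le\lambda_1\le\lambda_2\le\lambda_3$ be its eigenvalues (smooth on $\mathcal U\cap\{t>0\}$ for $\mathcal U$ a small neighborhood of $(0,\bar X)$). *)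

theory Defs
  imports "HOL-Analysis.Analysis" "HOL-Library.Multiset"
begin

definition dir_deriv :: "'a::real_normed_vector \<Rightarrow> ('a \<Rightarrow> real) \<Rightarrow> 'a \<Rightarrow> real" where
  "dir_deriv v f z = deriv (\<lambda>h. f (z + h *\<^sub>R v)) 0"

fun iter_partial :: "'a::real_normed_vector list \<Rightarrow> ('a \<Rightarrow> real) \<Rightarrow> 'a \<Rightarrow> real" where
  "iter_partial [] f = f"
| "iter_partial (v # vs) f = dir_deriv v (iter_partial vs f)"

definition smooth_bdd_on :: "'a::euclidean_space set \<Rightarrow> ('a \<Rightarrow> real) \<Rightarrow> bool" where
  "smooth_bdd_on U f \<longleftrightarrow>
     (\<forall>vs. set vs \<subseteq> Basis \<longrightarrow>
        continuous_on U (iter_partial vs f) \<and>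
        bounded (iter_partial vs f ` U) \<and>
        (\<forall>v\<in>Basis. \<forall>z\<in>U.
           ((\<lambda>h. iter_partial vs f (z + h *\<^sub>R v)) has_real_derivative
              iter_partial (v # vs) f z) (at 0)))"

text \<open>The matrix S(t,X) in terms of a = a(t,X), b = b(t,X).\<close>
definition Smat :: "real \<Rightarrow> real \<Rightarrow> real^3^3" where
  "Smat a b = vector [vector [3, 0, -a], vector [0, 2*a, 3*b], vector [-a, 3*b, a^2]]"

text \<open>Eigenvalues of a square real matrix counted with algebraic multiplicity:
  the multiset of roots of the characteristic polynomial det(mu I - M), when it splits over the reals.\<close>
definition eigen_mset :: "real^'n^'n \<Rightarrow> real multiset" where
  "eigen_mset M = (THE E. \<forall>\<mu>. det (\<mu> *\<^sub>R mat 1 - M) = (\<Prod>m\<in>#E. (\<mu> - m)))"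

text \<open>k-th smallest eigenvalue (k = 1,2,3), counted with multiplicity.\<close>
definition eig :: "nat \<Rightarrow> real^'n^'n \<Rightarrow> real" where
  "eig k M = sorted_list_of_multiset (eigen_mset M) ! (k - 1)"

definition Delta :: "real \<Rightarrow> real \<Rightarrow> real" where
  "Delta a b = 4 * a^3 - 27 * b^2"

end

theory Submission
  imports Defs "HOL-Computational_Algebra.Polynomial"
begin

text \<open>The characteristic polynomial \<open>P\<close> of \<open>S\<close> has constant term \<open>-\<Delta>\<close>. For \<open>0 < a \<le> 1/10\<close>
  and \<open>\<Delta> \<ge> 0\<close> its sign changes put the eigenvalues in \<open>[0, a\<^sup>2]\<close>, \<open>[a, 3a]\<close> and \<open>[2, 4]\<close>.
  So they are simple, \<open>\<Delta> = \<lambda>\<^sub>1\<lambda>\<^sub>2\<lambda>\<^sub>3 \<le> 12a\<lambda>\<^sub>1\<close>, and implicit differentiation gives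
  \<open>\<lambda>\<^sub>i' = -\<partial>\<^sub>tP(\<lambda>\<^sub>i) / \<Prod>\<^sub>j\<^sub>\<noteq>\<^sub>i(\<lambda>\<^sub>i - \<lambda>\<^sub>j)\<close> for \<open>i = 1, 2\<close>, with denominators of size at least \<open>a\<close>.
  The hypotheses bound \<open>\<phi> |\<partial>\<^sub>tP(\<mu>)|\<close> by a multiple of \<open>a\<mu> + \<Delta>\<close> for \<open>\<mu> \<in> [0, 1]\<close>, and division
  by \<open>a\<close> yields all three estimates. The neighbourhood is \<open>U = {a < 1/10}\<close>.\<close>

section \<open>Roots, eigenvalues and simple roots of parametrised families\<close>

lemma proots_prod_mset_linear: "proots (\<Prod>m\<in>#E. [:-m, 1:]) = (E :: real multiset)"
proof (induction E)
  case empty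
  then show ?case by simp
next
  case (add x E)
  have "(\<Prod>m\<in>#E. [:-m, 1::real:]) \<noteq> 0"
    by (auto simp add: prod_mset_zero_iff)
  then have "proots ([:-x, 1:] * (\<Prod>m\<in>#E. [:-m, 1:])) = proots [:-x, 1:] + E"
    using add by (subst proots_mult) auto
  also have "\<dots> = add_mset x E"
    by (metis proots_linear_factor minus_minus add_mset_add_single union_commute)
  finally show ?case by simp
qed

lemma prod_mset_linear_eq_imp_eq:
  fixes E F :: "real multiset"
  assumes "\<And>\<mu>. (\<Prod>m\<in>#E. (\<mu> - m)) = (\<Prod>m\<in>#F. (\<mu> - m))"
  shows "E = F"
proof -
  have "poly (\<Prod>m\<in>#E. [:-m, 1:]) = poly (\<Prod>m\<in>#F. [:-m, 1:])"
    using assms by (simp add: poly_prod_mset fun_eq_iff)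
  then show ?thesis
    by (metis poly_eq_poly_eq_iff proots_prod_mset_linear)
qed

lemma eigen_mset_eqI:
  fixes M :: "real^'n^'n"
  assumes "\<And>\<mu>. det (\<mu> *\<^sub>R mat 1 - M) = (\<Prod>m\<in>#E. (\<mu> - m))"
  shows "eigen_mset M = E"
  unfolding eigen_mset_def
proof (rule the_equality)
  show "\<forall>\<mu>. det (\<mu> *\<^sub>R mat 1 - M) = (\<Prod>m\<in>#E. (\<mu> - m))"
    using assms by blast
  show "F = E" if "\<forall>\<mu>. det (\<mu> *\<^sub>R mat 1 - M) = (\<Prod>m\<in>#F. (\<mu> - m))" for F
    using that assms by (intro prod_mset_linear_eq_imp_eq) metis
qed

lemma eig_eqI_sorted_roots:
  fixes M :: "real^'n^'n"
  assumes "\<And>\<mu>. det (\<mu> *\<^sub>R mat 1 - M) = (\<mu> - r1) * (\<mu> - r2) * (\<mu> - r3)"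
    and "r1 \<le> r2" "r2 \<le> r3"
  shows "eig 1 M = r1" "eig 2 M = r2" "eig 3 M = r3"
proof -
  have "eigen_mset M = mset [r1, r2, r3]"
    by (rule eigen_mset_eqI) (simp add: assms(1) mult.assoc)
  moreover have "sort [r1, r2, r3] = [r1, r2, r3]"
    using assms(2,3) by (intro sorted_sort_id) simp
  ultimately have "sorted_list_of_multiset (eigen_mset M) = [r1, r2, r3]"
    by (metis sorted_list_of_multiset_mset)
  then show "eig 1 M = r1" "eig 2 M = r2" "eig 3 M = r3"
    unfolding eig_def by simp_all
qed

lemma monic_cubic_eq_prod_roots:
  fixes x1 x2 x3 A B D :: real
  assumes "x1 < x2" "x2 < x3"
    and h1: "x1^3 + A*x1^2 + B*x1 + D = 0"
    and h2: "x2^3 + A*x2^2 + B*x2 + D = 0"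
    and h3: "x3^3 + A*x3^2 + B*x3 + D = 0"
  shows "\<mu>^3 + A*\<mu>^2 + B*\<mu> + D = (\<mu> - x1) * (\<mu> - x2) * (\<mu> - x3)"
proof -
  have "(x1 - x2) * (x1^2 + x1*x2 + x2^2 + A*(x1 + x2) + B) = 0" using h1 h2 by algebra
  then have e12: "x1^2 + x1*x2 + x2^2 + A*(x1 + x2) + B = 0" using assms by simp
  have "(x1 - x3) * (x1^2 + x1*x3 + x3^2 + A*(x1 + x3) + B) = 0" using h1 h3 by algebra
  then have e13: "x1^2 + x1*x3 + x3^2 + A*(x1 + x3) + B = 0" using assms by simp
  have "(x2 - x3) * (x1 + x2 + x3 + A) = 0" using e12 e13 by algebra
  then have eA: "A = -(x1 + x2 + x3)" using assms by simp
  have eB: "B = x1*x2 + x1*x3 + x2*x3" using e12 eA by algebra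
  have eD: "D = -(x1*x2*x3)" using h1 eA eB by algebra
  show ?thesis unfolding eA eB eD by algebra
qed

lemma isCont_factor_root:
  fixes f Q G :: "real \<Rightarrow> real"
  assumes Q: "isCont Q t"
    and fac: "\<forall>\<^sub>F s in nhds t. Q s = (f t - f s) * G s \<and> m \<le> \<bar>G s\<bar>"
    and m: "0 < m"
  shows "isCont f t"
proof -
  have "Q t = 0" using fac by (simp add: eventually_nhds_conv_at)
  have "\<forall>\<^sub>F s in at t. Q s = (f t - f s) * G s \<and> m \<le> \<bar>G s\<bar>"
    using fac by (simp add: eventually_nhds_conv_at)
  then have "\<forall>\<^sub>F s in at t. norm (f s - f t) \<le> \<bar>Q s\<bar> / m"
  proof (rule eventually_mono)
    fix s assume s: "Q s = (f t - f s) * G s \<and> m \<le> \<bar>G s\<bar>"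
    have "\<bar>f s - f t\<bar> * m \<le> \<bar>f s - f t\<bar> * \<bar>G s\<bar>" using s by (simp add: mult_left_mono)
    also have "\<dots> = \<bar>Q s\<bar>" using s by (simp add: abs_mult abs_minus_commute)
    finally show "norm (f s - f t) \<le> \<bar>Q s\<bar> / m" using m by (simp add: field_simps)
  qed
  moreover have "((\<lambda>s. \<bar>Q s\<bar> / m) \<longlongrightarrow> 0) (at t)"
  proof -
    have "((\<lambda>s. \<bar>Q s\<bar> / m) \<longlongrightarrow> \<bar>Q t\<bar> / m) (at t)"
      using Q m unfolding isCont_def by (intro tendsto_intros) auto
    then show ?thesis using \<open>Q t = 0\<close> by simp
  qed
  ultimately have "((\<lambda>s. f s - f t) \<longlongrightarrow> 0) (at t)" by (rule Lim_null_comparison)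
  then show ?thesis unfolding isCont_def by (simp add: LIM_zero_iff)
qed

lemma DERIV_factor_root:
  fixes f Q G :: "real \<Rightarrow> real"
  assumes Q': "(Q has_real_derivative Q't) (at t)"
    and fac: "\<forall>\<^sub>F s in nhds t. Q s = (f t - f s) * G s"
    and G: "isCont G t" "G t \<noteq> 0"
  shows "(f has_real_derivative - Q't / G t) (at t)"
proof -
  have "Q t = 0" using fac by (simp add: eventually_nhds_conv_at)
  obtain q where q: "\<And>z. Q z - Q t = q z * (z - t)" "isCont q t" "q t = Q't"
    using Q' CARAT_DERIV by blast
  define g where "g z = f t - Q z / G z" for z
  have "(g has_real_derivative - Q't / G t) (at t)"
    unfolding CARAT_DERIV
  proof (intro exI conjI allI)
    show "g z - g t = - (q z / G z) * (z - t)" for z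
      using q(1)[of z] \<open>Q t = 0\<close> unfolding g_def by (simp add: field_simps)
    show "isCont (\<lambda>z. - (q z / G z)) t" using q(2) G by (intro continuous_intros)
  qed (use q(3) in simp)
  moreover have "\<forall>\<^sub>F z in nhds t. G z \<noteq> 0"
  proof -
    have "\<forall>\<^sub>F z in at t. G z \<noteq> 0"
      using G unfolding isCont_def by (rule tendsto_imp_eventually_ne)
    then show ?thesis using G(2) by (simp add: eventually_nhds_conv_at)
  qed
  then have "\<forall>\<^sub>F z in nhds t. f z = g z"
    using fac by eventually_elim (simp add: g_def field_simps)
  ultimately show ?thesis by (subst DERIV_cong_ev[where g = g]) auto
qed

text \<open>The separation hypothesis makes all three roots continuous at \<open>t\<close>, which is what
  implicit differentiation of \<open>Q s (r1 s) = 0\<close> needs.\<close>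
lemma DERIV_cubic_family_root:
  fixes Q :: "real \<Rightarrow> real \<Rightarrow> real" and r1 r2 r3 :: "real \<Rightarrow> real"
  assumes Q': "\<And>\<mu>. ((\<lambda>s. Q s \<mu>) has_real_derivative Q' \<mu>) (at t)"
    and fac: "\<forall>\<^sub>F s in nhds t. \<forall>\<mu>. Q s \<mu> = (\<mu> - r1 s) * (\<mu> - r2 s) * (\<mu> - r3 s)"
    and sep: "\<forall>\<^sub>F s in nhds t. m \<le> \<bar>r1 t - r2 s\<bar> \<and> m \<le> \<bar>r1 t - r3 s\<bar> \<and>
                m \<le> \<bar>r2 t - r1 s\<bar> \<and> m \<le> \<bar>r2 t - r3 s\<bar> \<and>
                m \<le> \<bar>r3 t - r1 s\<bar> \<and> m \<le> \<bar>r3 t - r2 s\<bar>"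
    and m: "0 < m"
  shows "(r1 has_real_derivative - Q' (r1 t) / ((r1 t - r2 t) * (r1 t - r3 t))) (at t)"
proof -
  have cont: "isCont r t"
    if fac_r: "\<forall>\<^sub>F s in nhds t. Q s (r t) = (r t - r s) * ((r t - p s) * (r t - q s))"
      and sep_r: "\<forall>\<^sub>F s in nhds t. m \<le> \<bar>r t - p s\<bar> \<and> m \<le> \<bar>r t - q s\<bar>" for r p q
  proof (rule isCont_factor_root[where m = "m * m"])
    show "isCont (\<lambda>s. Q s (r t)) t" using Q' by (rule DERIV_isCont)
    show "\<forall>\<^sub>F s in nhds t. Q s (r t) = (r t - r s) * ((r t - p s) * (r t - q s)) \<and>
        m * m \<le> \<bar>(r t - p s) * (r t - q s)\<bar>"
      using fac_r sep_r by eventually_elim (use m in \<open>auto simp: abs_mult intro: mult_mono\<close>)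
  qed (use m in simp)
  have "isCont r2 t"
    using fac sep by (intro cont[of r2 r1 r3]; eventually_elim) (simp_all add: mult_ac)
  moreover have "isCont r3 t"
    using fac sep by (intro cont[of r3 r1 r2]; eventually_elim) (simp_all add: mult_ac)
  moreover have "m \<le> \<bar>r1 t - r2 t\<bar>" "m \<le> \<bar>r1 t - r3 t\<bar>"
    using eventually_nhds_x_imp_x[OF sep] by simp_all
  ultimately show ?thesis
  proof (intro DERIV_factor_root[OF Q', where G = "\<lambda>s. (r1 t - r2 s) * (r1 t - r3 s)"])
    show "\<forall>\<^sub>F s in nhds t. Q s (r1 t) = (r1 t - r1 s) * ((r1 t - r2 s) * (r1 t - r3 s))"
      using fac by eventually_elim (simp add: mult.assoc)
    show "isCont (\<lambda>s. (r1 t - r2 s) * (r1 t - r3 s)) t"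
      using \<open>isCont r2 t\<close> \<open>isCont r3 t\<close> by (intro continuous_intros)
  qed (use m in auto)
qed

lemma eventually_nhds_half_le_le_double:
  fixes A :: "real \<Rightarrow> real"
  assumes "isCont A t" "0 < A t"
  shows "\<forall>\<^sub>F s in nhds t. A t / 2 \<le> A s \<and> A s \<le> 2 * A t"
proof -
  have "(A \<longlongrightarrow> A t) (at t)" using assms(1) by (simp add: isCont_def)
  moreover have "A t / 2 < A t" "A t < 2 * A t" using assms(2) by simp_all
  ultimately have "\<forall>\<^sub>F s in at t. A t / 2 < A s" "\<forall>\<^sub>F s in at t. A s < 2 * A t"
    by (blast intro: order_tendstoD)+
  then have "\<forall>\<^sub>F s in at t. A t / 2 \<le> A s \<and> A s \<le> 2 * A t"
    by eventually_elim auto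
  then show ?thesis using assms(2) by (simp add: eventually_nhds_conv_at)
qed

lemma eventually_mem_open_and_less:
  fixes g :: "real \<Rightarrow> real"
  assumes "isCont g t" "g t < r" "open S" "t \<in> S"
  shows "\<forall>\<^sub>F s in nhds t. s \<in> S \<and> g s < r"
proof -
  have "\<forall>\<^sub>F s in at t. g s < r"
    using assms(1,2) unfolding isCont_def by (rule order_tendstoD)
  then have "\<forall>\<^sub>F s in nhds t. g s < r"
    using assms(2) by (simp add: eventually_nhds_conv_at)
  then show ?thesis
    using eventually_nhds_in_open[OF assms(3,4)] by eventually_elim simp
qed

lemma smooth_bdd_on_imp_continuous_on: "smooth_bdd_on S f \<Longrightarrow> continuous_on S f"
  unfolding smooth_bdd_on_def by (drule spec[of _ "[]"]) simp

lemma
  fixes f :: "real \<Rightarrow> 'a::euclidean_space \<Rightarrow> real"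
  assumes "smooth_bdd_on S (\<lambda>(t, X). f t X)"
  defines "f' \<equiv> iter_partial [(1, 0)] (\<lambda>(t, X). f t X)"
  shows smooth_bdd_on_DERIV_fst:
      "(t, X) \<in> S \<Longrightarrow> ((\<lambda>s. f s X) has_real_derivative f' (t, X)) (at t)"
    and smooth_bdd_on_bounded_partial_fst: "\<exists>K>0. \<forall>z\<in>S. \<bar>f' z\<bar> \<le> K"
proof -
  have e: "(1, 0) \<in> (Basis :: (real \<times> 'a) set)" by (simp add: Basis_prod_def)
  show "\<exists>K>0. \<forall>z\<in>S. \<bar>f' z\<bar> \<le> K"
    using assms(1) e unfolding smooth_bdd_on_def bounded_pos f'_def
    by (drule_tac spec[of _ "[(1, 0)]"]) auto
  have "\<forall>v\<in>Basis. \<forall>z\<in>S. ((\<lambda>h. (\<lambda>(t, X). f t X) (z + h *\<^sub>R v)) has_real_derivative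
      iter_partial [v] (\<lambda>(t, X). f t X) z) (at 0)"
    using assms(1) unfolding smooth_bdd_on_def by (drule_tac spec[of _ "[]"]) simp
  moreover assume "(t, X) \<in> S"
  ultimately have "((\<lambda>h. (\<lambda>(t, X). f t X) ((t, X) + h *\<^sub>R (1, 0))) has_real_derivative
      f' (t, X)) (at 0)"
    using e unfolding f'_def by blast
  then have "((\<lambda>h. f (h + t) X) has_real_derivative f' (t, X)) (at 0)"
    by (simp add: add.commute)
  then show "((\<lambda>s. f s X) has_real_derivative f' (t, X)) (at t)"
    using DERIV_shift[of "\<lambda>s. f s X" "f' (t, X)" 0 t] by simp
qed

section \<open>Spectrum of \<open>S\<close> for small \<open>a\<close>\<close>

definition Smat_charpoly :: "real \<Rightarrow> real \<Rightarrow> real \<Rightarrow> real" where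
  "Smat_charpoly a b \<mu> =
     \<mu>^3 - (3 + 2*a + a^2) * \<mu>^2 + (6*a + 2*a^2 + 2*a^3 - 9*b^2) * \<mu> - Delta a b"

lemma det_Smat: "det (\<mu> *\<^sub>R mat 1 - Smat a b) = Smat_charpoly a b \<mu>"
  unfolding det_3 Smat_def Smat_charpoly_def Delta_def
  by (simp add: mat_def vector_3 algebra_simps power2_eq_square power3_eq_cube)

text \<open>For small \<open>a > 0\<close> the three roots of the characteristic polynomial are separated by
  sign changes at \<open>0 \<le> a\<^sup>2 < a < 3a < 2 < 4\<close>.\<close>
lemma Smat_charpoly_roots:
  assumes a0: "0 < a" and a1: "a \<le> 1/10" and D: "0 \<le> Delta a b"
  obtains r1 r2 r3 where
    "0 \<le> r1" "r1 \<le> a^2" "Smat_charpoly a b r1 = 0"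
    "a \<le> r2" "r2 \<le> 3*a" "Smat_charpoly a b r2 = 0"
    "2 \<le> r3" "r3 \<le> 4" "Smat_charpoly a b r3 = 0"
proof -
  let ?P = "Smat_charpoly a b"
  have b2: "9*b^2 \<le> 4*a^3/3" using D unfolding Delta_def by simp
  have a2: "a^2 \<le> a/10" using a0 a1 by (simp add: power2_eq_square mult_left_mono)
  have a3: "a^3 \<le> a^2/10" using a0 a1 by (simp add: power2_eq_square power3_eq_cube mult_left_mono)
  have a4: "a^4 \<le> a^3/10" using a0 a1 by (simp add: power3_eq_cube mult_left_mono power4_eq_xxxx)
  have pos: "0 < a^2" "0 < a^3" "0 < a^4" "0 \<le> b^2" using a0 by simp_all
  have cont: "continuous_on S ?P" for S unfolding Smat_charpoly_def by (intro continuous_intros)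
  have "?P 0 \<le> 0" using D unfolding Smat_charpoly_def by simp
  moreover have "0 \<le> ?P (a^2)"
  proof -
    have "?P (a^2) = 2*a^3 - a^4 + 9*b^2*(3 - a^2)"
      unfolding Smat_charpoly_def Delta_def by algebra
    moreover have "0 \<le> 9*b^2*(3 - a^2)" using a2 a1 by simp
    ultimately show ?thesis using a4 pos by linarith
  qed
  ultimately obtain r1 where "0 \<le> r1" "r1 \<le> a^2" "?P r1 = 0"
    using IVT'[of ?P 0 0 "a^2"] cont by auto
  moreover have "0 \<le> ?P a"
  proof -
    have "?P a = 3*a^2 - 3*a^3 + a^4 + 9*b^2*(3 - a)"
      unfolding Smat_charpoly_def Delta_def by algebra
    moreover have "0 \<le> 9*b^2*(3 - a)" using a1 by simp
    ultimately show ?thesis using a3 pos by linarith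
  qed
  moreover have "?P (3*a) \<le> 0"
  proof -
    have "?P (3*a) = -9*a^2 + 11*a^3 - 3*a^4 + 9*b^2*(3 - 3*a)"
      unfolding Smat_charpoly_def Delta_def by algebra
    moreover have "9*b^2*(3 - 3*a) \<le> 9*b^2*3" using a0 by (intro mult_left_mono) auto
    ultimately show ?thesis using a3 b2 pos by linarith
  qed
  then obtain r2 where "a \<le> r2" "r2 \<le> 3*a" "?P r2 = 0"
    using IVT2'[of ?P "3*a" 0 a] \<open>0 \<le> ?P a\<close> cont a0 by auto
  moreover have "?P 2 \<le> 0"
    using b2 a3 a2 a1 unfolding Smat_charpoly_def Delta_def by simp
  moreover have "0 \<le> ?P 4"
    using b2 a3 a2 a1 pos unfolding Smat_charpoly_def Delta_def by simp
  then obtain r3 where "2 \<le> r3" "r3 \<le> 4" "?P r3 = 0"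
    using IVT'[of ?P 2 0 4] \<open>?P 2 \<le> 0\<close> cont by auto
  ultimately show ?thesis using that by blast
qed

lemma
  assumes "0 < a" "a \<le> 1/10" "0 \<le> Delta a b"
  shows Smat_eig_bounds:
      "0 \<le> eig 1 (Smat a b)" "eig 1 (Smat a b) \<le> a^2"
      "a \<le> eig 2 (Smat a b)" "eig 2 (Smat a b) \<le> 3*a"
      "2 \<le> eig 3 (Smat a b)" "eig 3 (Smat a b) \<le> 4"
    and Smat_charpoly_eq_prod_eig:
      "Smat_charpoly a b \<mu> =
         (\<mu> - eig 1 (Smat a b)) * (\<mu> - eig 2 (Smat a b)) * (\<mu> - eig 3 (Smat a b))"
proof -
  obtain r1 r2 r3 where r:
    "0 \<le> r1" "r1 \<le> a^2" "Smat_charpoly a b r1 = 0"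
    "a \<le> r2" "r2 \<le> 3*a" "Smat_charpoly a b r2 = 0"
    "2 \<le> r3" "r3 \<le> 4" "Smat_charpoly a b r3 = 0"
    using Smat_charpoly_roots assms by blast
  have "a^2 \<le> a/10" using assms by (simp add: power2_eq_square mult_left_mono)
  then have ord: "r1 < r2" "r2 < r3" using r assms by linarith+
  have charpoly_monic: "Smat_charpoly a b x =
      x^3 + (-(3 + 2*a + a^2))*x^2 + (6*a + 2*a^2 + 2*a^3 - 9*b^2)*x + (- Delta a b)" for x
    unfolding Smat_charpoly_def by algebra
  have fac: "Smat_charpoly a b x = (x - r1) * (x - r2) * (x - r3)" for x
    unfolding charpoly_monic
    by (rule monic_cubic_eq_prod_roots[OF ord]) (use r(3,6,9) charpoly_monic in simp_all)
  have "eig 1 (Smat a b) = r1" "eig 2 (Smat a b) = r2" "eig 3 (Smat a b) = r3"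
    using eig_eqI_sorted_roots[of "Smat a b" r1 r2 r3] fac ord by (simp_all add: det_Smat)
  then show
      "0 \<le> eig 1 (Smat a b)" "eig 1 (Smat a b) \<le> a^2"
      "a \<le> eig 2 (Smat a b)" "eig 2 (Smat a b) \<le> 3*a"
      "2 \<le> eig 3 (Smat a b)" "eig 3 (Smat a b) \<le> 4"
      "Smat_charpoly a b \<mu> =
         (\<mu> - eig 1 (Smat a b)) * (\<mu> - eig 2 (Smat a b)) * (\<mu> - eig 3 (Smat a b))"
    using r fac by simp_all
qed

lemma Delta_eq_prod_eig:
  assumes "0 < a" "a \<le> 1/10" "0 \<le> Delta a b"
  shows "Delta a b = eig 1 (Smat a b) * eig 2 (Smat a b) * eig 3 (Smat a b)"
  using Smat_charpoly_eq_prod_eig[OF assms, of 0] by (simp add: Smat_charpoly_def)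

definition Smat_charpoly_dt :: "real \<Rightarrow> real \<Rightarrow> real \<Rightarrow> real \<Rightarrow> real \<Rightarrow> real" where
  "Smat_charpoly_dt a b da db \<mu> =
     - (2 + 2*a) * da * \<mu>^2 + ((6 + 4*a + 6*a^2) * da - 18*b*db) * \<mu> - (12*a^2*da - 54*b*db)"

lemma DERIV_Smat_charpoly:
  assumes "(A has_real_derivative dA) (at t)" "(B has_real_derivative dB) (at t)"
  shows "((\<lambda>s. Smat_charpoly (A s) (B s) \<mu>) has_real_derivative
           Smat_charpoly_dt (A t) (B t) dA dB \<mu>) (at t)"
  unfolding Smat_charpoly_def Delta_def Smat_charpoly_dt_def
  by (rule derivative_eq_intros refl assms | simp)+
     (simp add: algebra_simps power2_eq_square power3_eq_cube)

lemma DERIV_Delta: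
  assumes "(A has_real_derivative dA) (at t)" "(B has_real_derivative dB) (at t)"
  shows "((\<lambda>s. Delta (A s) (B s)) has_real_derivative 12 * (A t)^2 * dA - 54 * B t * dB) (at t)"
  unfolding Delta_def by (rule derivative_eq_intros refl assms | simp)+

lemma
  fixes A B :: "real \<Rightarrow> real"
  assumes A': "(A has_real_derivative dA) (at t)" and B': "(B has_real_derivative dB) (at t)"
    and good: "\<forall>\<^sub>F s in nhds t. 0 < A s \<and> A s \<le> 1/10 \<and> 0 \<le> Delta (A s) (B s)"
  defines "l1 \<equiv> \<lambda>s. eig 1 (Smat (A s) (B s))"
    and "l2 \<equiv> \<lambda>s. eig 2 (Smat (A s) (B s))"
    and "l3 \<equiv> \<lambda>s. eig 3 (Smat (A s) (B s))"
  shows DERIV_Smat_eig1: "(l1 has_real_derivative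
           - Smat_charpoly_dt (A t) (B t) dA dB (l1 t) / ((l1 t - l2 t) * (l1 t - l3 t))) (at t)"
    and DERIV_Smat_eig2: "(l2 has_real_derivative
           - Smat_charpoly_dt (A t) (B t) dA dB (l2 t) / ((l2 t - l1 t) * (l2 t - l3 t))) (at t)"
proof -
  let ?Q = "\<lambda>s. Smat_charpoly (A s) (B s)"
  have fac: "\<forall>\<^sub>F s in nhds t. \<forall>\<mu>. ?Q s \<mu> = (\<mu> - l1 s) * (\<mu> - l2 s) * (\<mu> - l3 s)"
    using good by eventually_elim (simp add: Smat_charpoly_eq_prod_eig l1_def l2_def l3_def)
  have at: "0 < A t" "A t \<le> 1/10" "0 \<le> Delta (A t) (B t)"
    using eventually_nhds_x_imp_x[OF good] by simp_all
  have sep: "\<forall>\<^sub>F s in nhds t. A t / 5 \<le> \<bar>l1 t - l2 s\<bar> \<and> A t / 5 \<le> \<bar>l1 t - l3 s\<bar> \<and>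
      A t / 5 \<le> \<bar>l2 t - l1 s\<bar> \<and> A t / 5 \<le> \<bar>l2 t - l3 s\<bar> \<and>
      A t / 5 \<le> \<bar>l3 t - l1 s\<bar> \<and> A t / 5 \<le> \<bar>l3 t - l2 s\<bar>"
    using good eventually_nhds_half_le_le_double[OF DERIV_isCont[OF A'] at(1)]
  proof eventually_elim
    case (elim s)
    have "0 < A s" "A s \<le> 1/10" "0 \<le> Delta (A s) (B s)" "A t / 2 \<le> A s" "A s \<le> 2 * A t"
      using elim by simp_all
    note as = this Smat_eig_bounds[OF this(1-3)]
    note at = at Smat_eig_bounds[OF at]
    have "(A s)^2 \<le> A s / 10" "(A t)^2 \<le> A t / 10"
      using as at by (simp_all add: power2_eq_square mult_left_mono)
    then have "A t / 5 \<le> l2 s - l1 t" "A t / 5 \<le> l3 s - l1 t" "A t / 5 \<le> l2 t - l1 s"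
      "A t / 5 \<le> l3 s - l2 t" "A t / 5 \<le> l3 t - l1 s" "A t / 5 \<le> l3 t - l2 s"
      using as at unfolding l1_def l2_def l3_def by linarith+
    then show ?case by (simp add: abs_if)
  qed
  show "(l1 has_real_derivative
      - Smat_charpoly_dt (A t) (B t) dA dB (l1 t) / ((l1 t - l2 t) * (l1 t - l3 t))) (at t)"
    by (rule DERIV_cubic_family_root[OF DERIV_Smat_charpoly[OF A' B'] fac sep]) (use at in simp)
  have fac': "\<forall>\<^sub>F s in nhds t. \<forall>\<mu>. ?Q s \<mu> = (\<mu> - l2 s) * (\<mu> - l1 s) * (\<mu> - l3 s)"
    using fac by eventually_elim (simp add: mult_ac)
  show "(l2 has_real_derivative
      - Smat_charpoly_dt (A t) (B t) dA dB (l2 t) / ((l2 t - l1 t) * (l2 t - l3 t))) (at t)"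
    using sep
    by (intro DERIV_cubic_family_root[OF DERIV_Smat_charpoly[OF A' B'] fac', where m = "A t / 5"])
      (use at(1) in \<open>auto elim!: eventually_mono\<close>)
qed

lemma abs_le_of_Delta_nonneg:
  assumes "0 < a" "a \<le> 1" "0 \<le> Delta a b"
  shows "\<bar>b\<bar> \<le> a"
proof -
  have "a^3 \<le> a^2" using assms by (simp add: power2_eq_square power3_eq_cube mult_left_mono)
  moreover have "0 \<le> b^2" by simp
  ultimately have "b^2 \<le> a^2" using assms(3) unfolding Delta_def by linarith
  then show ?thesis using assms(1) by (simp add: abs_le_square_iff[symmetric])
qed

lemma abs_Smat_charpoly_dt_le:
  fixes a b da db p P C K \<mu> :: real
  assumes a: "0 < a" "a \<le> 1/10" and D: "0 \<le> Delta a b" and \<mu>: "0 \<le> \<mu>" "\<mu> \<le> 1"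
    and p: "0 < p" "p \<le> P" and K: "\<bar>db\<bar> \<le> K"
    and hDelta: "p * \<bar>12*a^2*da - 54*b*db\<bar> \<le> C * Delta a b"
    and ha: "p * \<bar>da\<bar> \<le> C * a"
  shows "p * \<bar>Smat_charpoly_dt a b da db \<mu>\<bar> \<le> a * \<mu> * (10*C + 18*\<bar>P\<bar>*K) + C * Delta a b"
proof -
  define c1 where "c1 = (2 + 2*a) * \<mu>^2"
  define c2 where "c2 = (6 + 4*a + 6*a^2) * \<mu>"
  have c: "0 \<le> c1" "0 \<le> c2" "c1 + c2 \<le> 10 * \<mu>"
  proof -
    have "\<mu>^2 \<le> \<mu>" "a^2 \<le> a" using \<mu> a by (simp_all add: power2_eq_square mult_left_le)
    then have "(2 + 2*a) * \<mu>^2 \<le> 3 * \<mu>" "(6 + 4*a + 6*a^2) * \<mu> \<le> 7 * \<mu>"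
      using \<mu> a by (simp_all add: mult_mono)
    then show "0 \<le> c1" "0 \<le> c2" "c1 + c2 \<le> 10 * \<mu>"
      unfolding c1_def c2_def using \<mu> a by simp_all
  qed
  have "Smat_charpoly_dt a b da db \<mu> = (c2 - c1) * da - 18 * \<mu> * (b * db) - (12*a^2*da - 54*b*db)"
    unfolding Smat_charpoly_dt_def c1_def c2_def by algebra
  then have "\<bar>Smat_charpoly_dt a b da db \<mu>\<bar>
      \<le> \<bar>(c2 - c1) * da\<bar> + \<bar>18 * \<mu> * (b * db)\<bar> + \<bar>12*a^2*da - 54*b*db\<bar>"
    by arith
  also have "\<dots> = \<bar>c2 - c1\<bar> * \<bar>da\<bar> + 18 * \<mu> * (\<bar>b\<bar> * \<bar>db\<bar>) + \<bar>12*a^2*da - 54*b*db\<bar>"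
    using \<mu> by (simp add: abs_mult)
  also have "\<dots> \<le> (c1 + c2) * \<bar>da\<bar> + 18 * \<mu> * (\<bar>b\<bar> * \<bar>db\<bar>) + \<bar>12*a^2*da - 54*b*db\<bar>"
    using c by (simp add: mult_right_mono)
  finally have "p * \<bar>Smat_charpoly_dt a b da db \<mu>\<bar>
      \<le> p * ((c1 + c2) * \<bar>da\<bar> + 18 * \<mu> * (\<bar>b\<bar> * \<bar>db\<bar>) + \<bar>12*a^2*da - 54*b*db\<bar>)"
    using p by (simp add: mult_left_mono)
  also have "\<dots> = (c1 + c2) * (p * \<bar>da\<bar>) + 18 * \<mu> * (p * (\<bar>b\<bar> * \<bar>db\<bar>)) + p * \<bar>12*a^2*da - 54*b*db\<bar>"
    by (simp add: algebra_simps)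
  also have "\<dots> \<le> (10 * \<mu>) * (C * a) + 18 * \<mu> * (\<bar>P\<bar> * (a * K)) + C * Delta a b"
  proof -
    have "(c1 + c2) * (p * \<bar>da\<bar>) \<le> (10 * \<mu>) * (C * a)"
      using c p \<mu> ha by (intro mult_mono[OF _ ha]) auto
    moreover have "\<bar>b\<bar> * \<bar>db\<bar> \<le> a * K"
      using abs_le_of_Delta_nonneg[of a b] a D K by (intro mult_mono) auto
    then have "p * (\<bar>b\<bar> * \<bar>db\<bar>) \<le> \<bar>P\<bar> * (a * K)"
      using p by (intro mult_mono[OF _ \<open>\<bar>b\<bar> * \<bar>db\<bar> \<le> a * K\<close>]) auto
    then have "18 * \<mu> * (p * (\<bar>b\<bar> * \<bar>db\<bar>)) \<le> 18 * \<mu> * (\<bar>P\<bar> * (a * K))"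
      using \<mu> by (intro mult_left_mono) auto
    ultimately show ?thesis using hDelta by linarith
  qed
  finally show ?thesis by (simp add: algebra_simps)
qed

lemma
  fixes a b da db p P C K :: real
  assumes a: "0 < a" "a \<le> 1/10" and D: "0 \<le> Delta a b"
    and p: "0 < p" "p \<le> P" and K: "\<bar>db\<bar> \<le> K" and C: "0 < C"
    and ha2: "p^2 * a \<le> C * Delta a b"
    and hDelta: "p * \<bar>12*a^2*da - 54*b*db\<bar> \<le> C * Delta a b"
    and ha: "p * \<bar>da\<bar> \<le> C * a"
  defines "l1 \<equiv> eig 1 (Smat a b)" and "l2 \<equiv> eig 2 (Smat a b)" and "l3 \<equiv> eig 3 (Smat a b)"
    and "C' \<equiv> 22*C + 18*\<bar>P\<bar>*K"
  shows Smat_eig1_lower_bound: "p^2 \<le> C' * l1"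
    and Smat_eig1_dt_bound:
      "p * \<bar>- Smat_charpoly_dt a b da db l1 / ((l1 - l2) * (l1 - l3))\<bar> \<le> C' * l1"
    and Smat_eig2_dt_bound:
      "p * \<bar>- Smat_charpoly_dt a b da db l2 / ((l2 - l1) * (l2 - l3))\<bar> \<le> C' * l2"
proof -
  note l = Smat_eig_bounds[OF a D, folded l1_def l2_def l3_def]
  have "a^2 \<le> a/10" using a by (simp add: power2_eq_square mult_left_mono)
  have "0 \<le> K" using K by linarith
  have "Delta a b = l1 * l2 * l3"
    unfolding l1_def l2_def l3_def using a D by (rule Delta_eq_prod_eig)
  also have "\<dots> \<le> l1 * (3*a) * 4" using l a by (intro mult_mono) auto
  finally have "Delta a b \<le> 12*a*l1" by (simp add: mult_ac)
  then have CDelta: "C * Delta a b \<le> 12*C*a*l1"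
    using C mult_left_mono[of "Delta a b" "12*a*l1" C] by (simp add: mult_ac)
  have "p^2 * a \<le> (12*C*l1) * a" using ha2 CDelta by (simp add: algebra_simps)
  then have "p^2 \<le> 12*C*l1" using a by simp
  also have "\<dots> \<le> C' * l1" unfolding C'_def using C \<open>0 \<le> K\<close> l by (intro mult_right_mono) auto
  finally show "p^2 \<le> C' * l1" .
  have root_bound: "p * \<bar>- Smat_charpoly_dt a b da db \<mu> / G\<bar> \<le> C' * \<mu>"
    if \<mu>: "l1 \<le> \<mu>" "\<mu> \<le> 1" and G: "9*a/10 \<le> \<bar>x\<bar>" "10/9 \<le> \<bar>y\<bar>" "G = x * y" for \<mu> G x y
  proof -
    have "(9*a/10) * (10/9) \<le> \<bar>x\<bar> * \<bar>y\<bar>" using G a by (intro mult_mono) auto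
    then have "a \<le> \<bar>G\<bar>" using G by (simp add: abs_mult)
    have "p * \<bar>Smat_charpoly_dt a b da db \<mu>\<bar> \<le> a * \<mu> * (10*C + 18*\<bar>P\<bar>*K) + C * Delta a b"
      using l \<mu> by (intro abs_Smat_charpoly_dt_le[OF a D _ _ p K hDelta ha]) auto
    also have "\<dots> \<le> a * \<mu> * (10*C + 18*\<bar>P\<bar>*K) + 12*C*a*\<mu>"
    proof -
      have "12*C*a*l1 \<le> 12*C*a*\<mu>" using \<mu> a C by (intro mult_left_mono) auto
      then show ?thesis using CDelta by linarith
    qed
    also have "\<dots> = a * (C' * \<mu>)" unfolding C'_def by algebra
    finally have "p * \<bar>Smat_charpoly_dt a b da db \<mu>\<bar> \<le> a * (C' * \<mu>)" .
    then have "p * \<bar>- Smat_charpoly_dt a b da db \<mu> / G\<bar> \<le> a * (C' * \<mu>) / \<bar>G\<bar>"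
      using p by (simp add: abs_divide divide_right_mono)
    also have "\<dots> \<le> a * (C' * \<mu>) / a"
      using \<open>a \<le> \<bar>G\<bar>\<close> a C \<open>0 \<le> K\<close> l \<mu> unfolding C'_def
      by (intro divide_left_mono mult_nonneg_nonneg) auto
    finally show ?thesis using a by simp
  qed
  show "p * \<bar>- Smat_charpoly_dt a b da db l1 / ((l1 - l2) * (l1 - l3))\<bar> \<le> C' * l1"
    using l \<open>a^2 \<le> a/10\<close> a by (intro root_bound) auto
  show "p * \<bar>- Smat_charpoly_dt a b da db l2 / ((l2 - l1) * (l2 - l3))\<bar> \<le> C' * l2"
    using l \<open>a^2 \<le> a/10\<close> a by (intro root_bound) auto
qed

lemma Smat_eig_deriv_estimates:
  fixes A B :: "real \<Rightarrow> real"
  assumes A': "(A has_real_derivative dA) (at t)" and B': "(B has_real_derivative dB) (at t)"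
    and good: "\<forall>\<^sub>F s in nhds t. 0 < A s \<and> A s \<le> 1/10 \<and> 0 \<le> Delta (A s) (B s)"
    and p: "0 < p" "p \<le> P" and K: "\<bar>dB\<bar> \<le> K" and C: "0 < C"
    and hA2: "p^2 * A t \<le> C * Delta (A t) (B t)"
    and hDelta: "p * \<bar>deriv (\<lambda>s. Delta (A s) (B s)) t\<bar> \<le> C * Delta (A t) (B t)"
    and hA: "p * \<bar>deriv A t\<bar> \<le> C * A t"
  defines "C' \<equiv> 22*C + 18*\<bar>P\<bar>*K"
  shows "p^2 \<le> C' * eig 1 (Smat (A t) (B t)) \<and>
    p * \<bar>deriv (\<lambda>s. eig 1 (Smat (A s) (B s))) t\<bar> \<le> C' * eig 1 (Smat (A t) (B t)) \<and>
    p * \<bar>deriv (\<lambda>s. eig 2 (Smat (A s) (B s))) t\<bar> \<le> C' * eig 2 (Smat (A t) (B t))"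
proof -
  have at: "0 < A t" "A t \<le> 1/10" "0 \<le> Delta (A t) (B t)"
    using eventually_nhds_x_imp_x[OF good] by simp_all
  have "deriv (\<lambda>s. Delta (A s) (B s)) t = 12 * (A t)^2 * dA - 54 * B t * dB"
    by (rule DERIV_imp_deriv[OF DERIV_Delta[OF A' B']])
  moreover have "deriv A t = dA" by (rule DERIV_imp_deriv[OF A'])
  ultimately have h: "p * \<bar>12 * (A t)^2 * dA - 54 * B t * dB\<bar> \<le> C * Delta (A t) (B t)"
    "p * \<bar>dA\<bar> \<le> C * A t"
    using hDelta hA by simp_all
  show ?thesis
    unfolding C'_def DERIV_imp_deriv[OF DERIV_Smat_eig1[OF A' B' good]]
      DERIV_imp_deriv[OF DERIV_Smat_eig2[OF A' B' good]]
    using Smat_eig1_lower_bound[OF at p K C hA2 h] Smat_eig1_dt_bound[OF at p K C hA2 h]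
      Smat_eig2_dt_bound[OF at p K C hA2 h]
    by blast
qed

lemma small_a_neighbourhood:
  fixes a b :: "real \<Rightarrow> 'a::euclidean_space \<Rightarrow> real"
  assumes "open W" "Xbar \<in> W" "0 < c" "0 < T"
    and a_cont: "continuous_on ({-c<..<T} \<times> W) (\<lambda>(t, X). a t X)"
    and a_cont_t: "\<And>t X. (t, X) \<in> {-c<..<T} \<times> W \<Longrightarrow> isCont (\<lambda>s. a s X) t"
    and Delta_nonneg: "\<And>t X. t \<in> {0..<T} \<Longrightarrow> X \<in> W \<Longrightarrow> Delta (a t X) (b t X) \<ge> 0"
    and "a 0 Xbar = 0"
    and a_pos: "\<And>t X. t \<in> {0<..<T} \<Longrightarrow> X \<in> W \<Longrightarrow> a t X > 0"
  obtains U where "open U" "(0, Xbar) \<in> U" "U \<subseteq> {-c<..<T} \<times> W"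
    "\<And>t X. (t, X) \<in> U \<Longrightarrow> 0 < t \<Longrightarrow>
       \<forall>\<^sub>F s in nhds t. 0 < a s X \<and> a s X \<le> 1/10 \<and> 0 \<le> Delta (a s X) (b s X)"
proof
  let ?\<Omega> = "{-c<..<T} \<times> W"
  define U where "U = (\<lambda>(t, X). a t X) -` {..<1/10} \<inter> ?\<Omega>"
  have "open ?\<Omega>" using \<open>open W\<close> by (intro open_Times) auto
  then show "open U"
    unfolding U_def using a_cont by (subst (asm) continuous_on_open_vimage) auto
  show "(0, Xbar) \<in> U" "U \<subseteq> ?\<Omega>"
    unfolding U_def using assms(2-4,8) by auto
  show "\<forall>\<^sub>F s in nhds t. 0 < a s X \<and> a s X \<le> 1/10 \<and> 0 \<le> Delta (a s X) (b s X)"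
    if "(t, X) \<in> U" "0 < t" for t X
  proof -
    have "X \<in> W" "a t X < 1/10" "t \<in> {0<..<T}" "isCont (\<lambda>s. a s X) t"
      using that a_cont_t[of t X] unfolding U_def by auto
    then have "\<forall>\<^sub>F s in nhds t. s \<in> {0<..<T} \<and> a s X < 1/10"
      by (intro eventually_mem_open_and_less) auto
    then show ?thesis
      by eventually_elim (use a_pos Delta_nonneg \<open>X \<in> W\<close> in auto)
  qed
qed

theorem lemma3p1:
  fixes a b :: "real \<Rightarrow> real^'l \<Rightarrow> real"
    and W :: "(real^'l) set" and Xbar :: "real^'l" and c T :: real
  assumes W_open: "open W" and Xbar_in: "Xbar \<in> W"
    and c_pos: "c > 0" and T_pos: "T > 0"
    and a_smooth: "smooth_bdd_on ({-c<..<T} \<times> W) (\<lambda>(t, X). a t X)"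
    and b_smooth: "smooth_bdd_on ({-c<..<T} \<times> W) (\<lambda>(t, X). b t X)"
    and Delta_nonneg: "\<And>t X. t \<in> {0..<T} \<Longrightarrow> X \<in> W \<Longrightarrow> Delta (a t X) (b t X) \<ge> 0"
    and a_zero: "a 0 Xbar = 0"
    and a_pos: "\<And>t X. t \<in> {0<..<T} \<Longrightarrow> X \<in> W \<Longrightarrow> a t X > 0"
  shows "\<exists>U. open U \<and> (0, Xbar) \<in> U \<and> U \<subseteq> {-c<..<T} \<times> W \<and>
    (\<forall>(t, X)\<in>U. t > 0 \<longrightarrow>
       (\<exists>D. ((\<lambda>s. eig 1 (Smat (a s X) (b s X))) has_real_derivative D) (at t)) \<and>
       (\<exists>D. ((\<lambda>s. eig 2 (Smat (a s X) (b s X))) has_real_derivative D) (at t))) \<and>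
    (\<forall>\<omega> (\<phi> :: real \<times> (real^'l) \<Rightarrow> real) C.
       \<omega> \<subseteq> U \<inter> {(t, X). t > 0} \<longrightarrow>
       (\<forall>z\<in>\<omega>. \<phi> z > 0) \<longrightarrow>
       (\<exists>B. \<forall>z\<in>\<omega>. \<phi> z \<le> B) \<longrightarrow>
       C > 0 \<longrightarrow>
       (\<forall>(t, X)\<in>\<omega>.
          (\<phi> (t, X))^2 * a t X \<le> C * Delta (a t X) (b t X) \<and>
          \<phi> (t, X) * \<bar>deriv (\<lambda>s. Delta (a s X) (b s X)) t\<bar> \<le> C * Delta (a t X) (b t X) \<and>
          \<phi> (t, X) * \<bar>deriv (\<lambda>s. a s X) t\<bar> \<le> C * a t X) \<longrightarrow>
       (\<exists>C'>0. \<forall>(t, X)\<in>\<omega>.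
          (\<phi> (t, X))^2 \<le> C' * eig 1 (Smat (a t X) (b t X)) \<and>
          \<phi> (t, X) * \<bar>deriv (\<lambda>s. eig 1 (Smat (a s X) (b s X))) t\<bar>
             \<le> C' * eig 1 (Smat (a t X) (b t X)) \<and>
          \<phi> (t, X) * \<bar>deriv (\<lambda>s. eig 2 (Smat (a s X) (b s X))) t\<bar>
             \<le> C' * eig 2 (Smat (a t X) (b t X))))"
proof -
  define da where "da = iter_partial [(1, 0)] (\<lambda>(t, X). a t X)"
  define db where "db = iter_partial [(1, 0)] (\<lambda>(t, X). b t X)"
  note da = smooth_bdd_on_DERIV_fst[OF a_smooth, folded da_def]
  note db = smooth_bdd_on_DERIV_fst[OF b_smooth, folded db_def]
  obtain K where "0 < K" and K: "\<And>z. z \<in> {-c<..<T} \<times> W \<Longrightarrow> \<bar>db z\<bar> \<le> K"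
    using smooth_bdd_on_bounded_partial_fst[OF b_smooth, folded db_def] by blast
  obtain U where U: "open U" "(0, Xbar) \<in> U" "U \<subseteq> {-c<..<T} \<times> W"
    and good: "\<And>t X. (t, X) \<in> U \<Longrightarrow> 0 < t \<Longrightarrow>
       \<forall>\<^sub>F s in nhds t. 0 < a s X \<and> a s X \<le> 1/10 \<and> 0 \<le> Delta (a s X) (b s X)"
    using small_a_neighbourhood[OF W_open Xbar_in c_pos T_pos
        smooth_bdd_on_imp_continuous_on[OF a_smooth] DERIV_isCont[OF da] Delta_nonneg a_zero a_pos]
    by blast
  show ?thesis
    apply (intro exI[of _ U] conjI allI impI)
    using U apply blast+
    subgoal using U(3) by (blast intro: DERIV_Smat_eig1[OF da db good] DERIV_Smat_eig2[OF da db good])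
    subgoal premises prems for \<omega> \<phi> C
    proof -
      obtain P where P: "\<And>z. z \<in> \<omega> \<Longrightarrow> \<phi> z \<le> P" using prems(3) by blast
      define C' where "C' = 22*C + 18*\<bar>P\<bar>*K"
      have "0 < C'" unfolding C'_def using prems(4) \<open>0 < K\<close> by (simp add: add_pos_nonneg)
      moreover have "\<phi> (t, X)^2 \<le> C' * eig 1 (Smat (a t X) (b t X)) \<and>
          \<phi> (t, X) * \<bar>deriv (\<lambda>s. eig 1 (Smat (a s X) (b s X))) t\<bar> \<le> C' * eig 1 (Smat (a t X) (b t X)) \<and>
          \<phi> (t, X) * \<bar>deriv (\<lambda>s. eig 2 (Smat (a s X) (b s X))) t\<bar> \<le> C' * eig 2 (Smat (a t X) (b t X))"
        if tX: "(t, X) \<in> \<omega>" for t X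
        unfolding C'_def
      proof (rule Smat_eig_deriv_estimates)
        have "(t, X) \<in> U" "0 < t" using tX prems(1) by auto
        then show "\<forall>\<^sub>F s in nhds t. 0 < a s X \<and> a s X \<le> 1/10 \<and> 0 \<le> Delta (a s X) (b s X)"
          by (rule good)
        have "(t, X) \<in> {-c<..<T} \<times> W" using \<open>(t, X) \<in> U\<close> U(3) by blast
        then show "((\<lambda>s. a s X) has_real_derivative da (t, X)) (at t)"
          "((\<lambda>s. b s X) has_real_derivative db (t, X)) (at t)" "\<bar>db (t, X)\<bar> \<le> K"
          by (rule da db K)+
      qed (use tX prems(2,4) P[OF tX] bspec[OF prems(5) tX] in auto)
      ultimately show ?thesis by blast
    qed
    done
qed

end
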